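(* Let $\Phi$ be a family of spherical simplices generating the reflection group $B_n$. Then there exists a unique embedding of $\Phi$ into $B_n$, up to the action of the Weyl group of $B_n$.
   Context: A family of spherical simplices in $S^{n-1}$ is the set of $2^n$ simplices cut out by $n$ hyperplanes through the origin in $\mathbb{R}^n$ with linearly independent unit normals $f_1,\dots,f_n$; it is encoded by $\pm f_1,\dots,\pm f_n$, and it generates the group generated by the reflections in the hyperplanes $f_i^\perp$. Let $\Delta(B_n)=\{\pm h_i,\ \pm h_i\pm h_j:1\le i<j\le n\}$ ($h_1,\dots,h_n$ the standard basis of $\mathbb{R}^n$) with Weyl group $W$. An embedding of $\Phi$ into $B_n$ is a realization of $\Phi$ (by an isometry) such that the normal vectors $\pm f_1,\dots,\pm f_n$, suitably normalized, are chosen from $\Delta(B_n)$. Two embeddings are considered the same if they differ by an element of $W$. *)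

theory Defs
  imports "HOL-Analysis.Analysis"
begin

definition refl_hyp :: "real^'n \<Rightarrow> real^'n \<Rightarrow> real^'n" where
  "refl_hyp v x = x - ((2 * (x \<bullet> v)) / (v \<bullet> v)) *\<^sub>R v"

text \<open>Group generated by a set of involutions (reflections): closure of the identity
  under left composition with generators (for involutive generators this is the group).\<close>
inductive_set gen_group :: "('a \<Rightarrow> 'a) set \<Rightarrow> ('a \<Rightarrow> 'a) set" for S where
  gen_id: "id \<in> gen_group S"
| gen_step: "s \<in> S \<Longrightarrow> g \<in> gen_group S \<Longrightarrow> s \<circ> g \<in> gen_group S"

definition Delta_B :: "(real^'n) set" where
  "Delta_B = {axis i 1 | i. True} \<union> {- axis i 1 | i. True} \<union>
     {s *\<^sub>R axis i 1 + t *\<^sub>R axis j 1 | i j s t.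
        i \<noteq> j \<and> s \<in> {-1, 1} \<and> t \<in> {-1, 1}}"

definition Weyl_B :: "(real^'n \<Rightarrow> real^'n) set" where
  "Weyl_B = gen_group (refl_hyp ` Delta_B)"

text \<open>A family of spherical simplices, given by n linearly independent unit normals.\<close>
definition simplex_family :: "('n \<Rightarrow> real^'n) \<Rightarrow> bool" where
  "simplex_family f \<longleftrightarrow> inj f \<and> independent (range f) \<and> (\<forall>i. norm (f i) = 1)"

definition family_group :: "('n \<Rightarrow> real^'n) \<Rightarrow> (real^'n \<Rightarrow> real^'n) set" where
  "family_group f = gen_group (refl_hyp ` range f)"

definition generates_B :: "('n \<Rightarrow> real^'n) \<Rightarrow> bool" where
  "generates_B f \<longleftrightarrow> (\<exists>T :: real^'n \<Rightarrow> real^'n. orthogonal_transformation T \<and>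
      (\<lambda>g. T \<circ> g \<circ> inv T) ` family_group f = Weyl_B)"

definition embedding_B :: "('n \<Rightarrow> real^'n) \<Rightarrow> (real^'n \<Rightarrow> real^'n) \<Rightarrow> bool" where
  "embedding_B f g \<longleftrightarrow> orthogonal_transformation g \<and>
      (\<forall>i. \<exists>c>0. c *\<^sub>R g (f i) \<in> Delta_B)"

definition realized :: "('n \<Rightarrow> real^'n) \<Rightarrow> (real^'n \<Rightarrow> real^'n) \<Rightarrow> (real^'n) set" where
  "realized f g = {g (f i) | i. True} \<union> {- g (f i) | i. True}"

end

theory Submission
  imports Defs
begin

text \<open>
  If an isometry \<open>T\<close> conjugates the reflection group of \<open>\<Phi>\<close> onto \<open>W = W(B\<^sub>n)\<close>, the reflection
  in \<open>(T f\<^sub>i)\<^sup>\<bottom>\<close> lies in \<open>W\<close>, i.e. is a signed permutation, and this forces \<open>T f\<^sub>i\<close> to be a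
  multiple of a root: \<open>T\<close> is an embedding.  Every embedding \<open>g\<close> conjugates the reflection group
  of \<open>\<Phi>\<close> into \<open>W\<close>, hence onto \<open>W\<close> by counting; so for two embeddings the isometry
  \<open>h = g\<^sub>2 \<circ> g\<^sub>1\<^sup>-\<^sup>1\<close> normalises \<open>W\<close> and maps roots to multiples of roots.  Then the images of
  \<open>h\<^sub>1, \<dots>, h\<^sub>n\<close> form an orthonormal frame of root directions whose pairwise sums are again root
  directions.  If one of them were along a long root \<open>\<plusminus>h\<^sub>a \<plusminus> h\<^sub>b\<close>, all others would lie in the
  plane of \<open>h\<^sub>a, h\<^sub>b\<close>, impossible for \<open>n \<ge> 3\<close>; so for \<open>n \<noteq> 2\<close> the map \<open>h\<close> is a signed
  permutation, i.e. \<open>h \<in> W\<close>.  For \<open>n = 2\<close> the normaliser is larger, but the two normals cannot be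
  orthogonal (\<open>W(B\<^sub>2)\<close> is not abelian), so every realization consists of a short and a long
  root, not orthogonal, and signed permutations act transitively on such pairs up to sign.
\<close>

section \<open>Reflections\<close>

lemma linear_refl_hyp: "linear (refl_hyp v)"
  unfolding refl_hyp_def
  by (intro linearI) (simp_all add: inner_add_left add_divide_distrib scaleR_add_left
      scaleR_diff_right)

lemma refl_hyp_refl_hyp:
  assumes "v \<noteq> 0"
  shows "refl_hyp v (refl_hyp v x) = x"
proof -
  define c where "c = 2 * (x \<bullet> v) / (v \<bullet> v)"
  have "2 * ((x - c *\<^sub>R v) \<bullet> v) / (v \<bullet> v) = - c"
    using assms by (simp add: c_def inner_diff_left field_simps)
  then show ?thesis
    unfolding refl_hyp_def c_def[symmetric] by simp
qed

lemma inj_refl_hyp: "v \<noteq> 0 \<Longrightarrow> inj (refl_hyp v)"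
  by (metis injI refl_hyp_refl_hyp)

lemma refl_hyp_scaleR: "c \<noteq> 0 \<Longrightarrow> refl_hyp (c *\<^sub>R v) = refl_hyp v"
  unfolding refl_hyp_def by (rule ext) (simp add: field_simps)

lemma refl_hyp_diff:
  assumes "x \<bullet> x = y \<bullet> y" "x \<noteq> y"
  shows "refl_hyp (x - y) x = y"
proof -
  have "2 * (x \<bullet> (x - y)) = (x - y) \<bullet> (x - y)"
    using assms(1) by (simp add: inner_diff_left inner_diff_right inner_commute)
  moreover have "(x - y) \<bullet> (x - y) \<noteq> 0"
    using assms(2) by simp
  ultimately show ?thesis
    unfolding refl_hyp_def by simp
qed

lemma refl_hyp_axis: "refl_hyp r (axis k 1) = axis k 1 - (2 * r $ k / (r \<bullet> r)) *\<^sub>R r"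
  unfolding refl_hyp_def by (simp add: inner_axis')

lemma refl_hyp_commute:
  assumes "u \<bullet> v = 0"
  shows "refl_hyp u \<circ> refl_hyp v = refl_hyp v \<circ> refl_hyp u"
  using assms
  by (auto simp: fun_eq_iff refl_hyp_def inner_commute algebra_simps)

lemma orthogonal_transformation_conj_refl_hyp:
  fixes T :: "real^'n \<Rightarrow> real^'n"
  assumes "orthogonal_transformation T"
  shows "T \<circ> refl_hyp v \<circ> inv T = refl_hyp (T v)"
proof
  fix y
  have "T (inv T y) = y"
    by (rule surj_f_inv_f[OF orthogonal_transformation_surj[OF assms]])
  moreover have "T a \<bullet> T b = a \<bullet> b" for a b
    using assms by (simp add: orthogonal_transformation_def)
  ultimately show "(T \<circ> refl_hyp v \<circ> inv T) y = refl_hyp (T v) y"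
    unfolding refl_hyp_def comp_apply
    using linear_diff[OF orthogonal_transformation_linear[OF assms]]
      orthogonal_transformation_scaleR[OF assms] by metis
qed

section \<open>Groups generated by involutions\<close>

lemma gen_group_generator: "s \<in> S \<Longrightarrow> s \<in> gen_group S"
  using gen_step[OF _ gen_id] by fastforce

lemma gen_group_mono: "g \<in> gen_group S \<Longrightarrow> S \<subseteq> S' \<Longrightarrow> g \<in> gen_group S'"
  by (induction rule: gen_group.induct) (auto intro: gen_group.intros)

lemma conj_comp:
  assumes "bij T"
  shows "(T \<circ> a \<circ> inv T) \<circ> (T \<circ> b \<circ> inv T) = T \<circ> (a \<circ> b) \<circ> inv T"
  using assms by (auto simp: fun_eq_iff bij_is_inj inv_f_f)

lemma gen_group_conj:
  assumes "bij T"
  shows "g \<in> gen_group S \<Longrightarrow> T \<circ> g \<circ> inv T \<in> gen_group ((\<lambda>s. T \<circ> s \<circ> inv T) ` S)"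
proof (induction rule: gen_group.induct)
  case gen_id
  have "T \<circ> id \<circ> inv T = id"
    using assms by (auto simp: fun_eq_iff bij_is_surj surj_f_inv_f)
  then show ?case
    by (metis gen_group.gen_id)
next
  case (gen_step s g)
  then show ?case
    unfolding conj_comp[OF assms, symmetric] by (blast intro: gen_group.gen_step)
qed

lemma inj_conj: "bij T \<Longrightarrow> inj (\<lambda>g. T \<circ> g \<circ> inv T)"
  by (rule injI) (metis bij_is_inj comp_apply ext inv_f_f)

lemma gen_group_commute:
  assumes "\<And>s t. s \<in> S \<Longrightarrow> t \<in> S \<Longrightarrow> s \<circ> t = t \<circ> s"
    and "a \<in> gen_group S" "b \<in> gen_group S"
  shows "a \<circ> b = b \<circ> a"
proof -
  have generator: "s \<circ> b = b \<circ> s" if "s \<in> S" for s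
    using assms(3)
  proof (induction rule: gen_group.induct)
    case (gen_step t g)
    then show ?case
      using assms(1)[OF that] by (metis comp_assoc)
  qed simp
  from assms(2) show ?thesis
  proof (induction rule: gen_group.induct)
    case (gen_step t g)
    then show ?case
      using generator by (metis comp_assoc)
  qed simp
qed

section \<open>Roots of \<open>B\<^sub>n\<close> and root directions\<close>

lemma axis_nth_if: "axis k x $ i = (if i = k then x else 0)"
  by (simp add: axis_def)

lemma Delta_B_cases [consumes 1, case_names short long]:
  assumes "r \<in> Delta_B"
  obtains (short) j \<sigma> where "\<sigma> \<in> {-1, 1}" "r = \<sigma> *\<^sub>R axis j 1"
  | (long) a b s t where "a \<noteq> b" "s \<in> {-1, 1}" "t \<in> {-1, 1}"
      "r = s *\<^sub>R axis a 1 + t *\<^sub>R axis b 1"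
proof -
  from assms consider i where "r = axis i 1" | i where "r = - axis i 1"
    | a b s t where "a \<noteq> b" "s \<in> {-1, 1}" "t \<in> {-1, 1}" "r = s *\<^sub>R axis a 1 + t *\<^sub>R axis b 1"
    unfolding Delta_B_def by blast
  then show thesis
  proof cases
    case (1 i)
    then show thesis
      using short[of 1 i] by simp
  next
    case (2 i)
    then show thesis
      using short[of "-1" i] by simp
  next
    case (3 a b s t)
    then show thesis
      by (rule long)
  qed
qed

lemma Delta_B_short: "\<sigma> \<in> {-1, 1} \<Longrightarrow> \<sigma> *\<^sub>R axis j 1 \<in> Delta_B"
  unfolding Delta_B_def by auto

lemma Delta_B_long:
  "a \<noteq> b \<Longrightarrow> s \<in> {-1, 1} \<Longrightarrow> t \<in> {-1, 1} \<Longrightarrow> s *\<^sub>R axis a 1 + t *\<^sub>R axis b 1 \<in> Delta_B"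
  unfolding Delta_B_def by blast

lemma Delta_B_nonzero: "r \<in> Delta_B \<Longrightarrow> r \<noteq> 0"
  by (cases rule: Delta_B_cases) (auto simp: vec_eq_iff axis_nth_if)

definition root_direction :: "real^'n \<Rightarrow> bool" where
  "root_direction x \<longleftrightarrow> (\<exists>c>0. c *\<^sub>R x \<in> Delta_B)"

lemma embedding_B_iff: "embedding_B f g \<longleftrightarrow>
    orthogonal_transformation g \<and> (\<forall>i. root_direction (g (f i)))"
  unfolding embedding_B_def root_direction_def ..

lemma root_direction_cases [consumes 1, case_names short long]:
  assumes "root_direction x"
  obtains (short) d j \<sigma> where "d > 0" "\<sigma> \<in> {-1, 1}" "x = (\<sigma> * d) *\<^sub>R axis j 1"
  | (long) d a b s t where "d > 0" "a \<noteq> b" "s \<in> {-1, 1}" "t \<in> {-1, 1}"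
      "x = (s * d) *\<^sub>R axis a 1 + (t * d) *\<^sub>R axis b 1"
proof -
  obtain c where c: "c > 0" "c *\<^sub>R x \<in> Delta_B"
    using assms unfolding root_direction_def by blast
  have x: "x = (1 / c) *\<^sub>R (c *\<^sub>R x)"
    using c(1) by simp
  from c(2) show thesis
  proof (cases rule: Delta_B_cases)
    case (short j \<sigma>)
    then show thesis
      using that(1)[of "1 / c" \<sigma> j] x c(1) by (simp add: mult.commute)
  next
    case (long a b s t)
    then show thesis
      using that(2)[of "1 / c" a b s t] x c(1) by (simp add: mult.commute scaleR_add_right)
  qed
qed

lemma Delta_B_uminus:
  assumes "r \<in> Delta_B"
  shows "- r \<in> Delta_B"
  using assms
proof (cases rule: Delta_B_cases)
  case (short j \<sigma>)
  then show ?thesis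
    using Delta_B_short[of "- \<sigma>" j] by auto
next
  case (long a b s t)
  then show ?thesis
    using Delta_B_long[of a b "- s" "- t"] by auto
qed

lemma root_direction_scaleR:
  assumes "c \<noteq> 0" "r \<in> Delta_B"
  shows "root_direction (c *\<^sub>R r)"
proof (cases "c > 0")
  case True
  then show ?thesis
    unfolding root_direction_def using assms by (intro exI[of _ "1 / c"]) auto
next
  case False
  then show ?thesis
    unfolding root_direction_def using assms Delta_B_uminus
    by (intro exI[of _ "- 1 / c"]) auto
qed

section \<open>Signed permutations form the Weyl group\<close>

definition short_unit :: "real^'n \<Rightarrow> bool" where
  "short_unit x \<longleftrightarrow> (\<exists>j \<sigma>. \<sigma> \<in> {-1, 1} \<and> x = \<sigma> *\<^sub>R axis j 1)"

definition signed_perm :: "(real^'n \<Rightarrow> real^'n) \<Rightarrow> bool" where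
  "signed_perm h \<longleftrightarrow> linear h \<and> inj h \<and> (\<forall>k. short_unit (h (axis k 1)))"

lemma linear_eq_on_axes:
  fixes f g :: "real^'n \<Rightarrow> real^'n"
  assumes "linear f" "linear g" "\<And>i. f (axis i 1) = g (axis i 1)"
  shows "f = g"
  using assms(1,2) by (rule linear_eq_stdbasis) (auto simp: Basis_vec_def assms(3))

lemma short_unit_iff: "short_unit x \<longleftrightarrow> (\<exists>j. x = axis j 1 \<or> x = - axis j 1)"
  unfolding short_unit_def by (metis insert_iff scaleR_minus1_left scaleR_one singletonD)

lemma short_unit_axis: "short_unit (axis j 1)" and short_unit_neg_axis: "short_unit (- axis j 1)"
  by (auto simp: short_unit_iff)

lemma short_unit_scaleR: "\<sigma> \<in> {-1, 1} \<Longrightarrow> short_unit (\<sigma> *\<^sub>R axis j 1)"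
  unfolding short_unit_def by blast

lemma signed_perm_id: "signed_perm id"
  unfolding signed_perm_def by (simp add: short_unit_axis linear_id)

lemma signed_perm_comp:
  assumes "signed_perm a" "signed_perm b"
  shows "signed_perm (a \<circ> b)"
proof -
  have "short_unit (a (b (axis k 1)))" for k
  proof -
    obtain j \<sigma> where "\<sigma> \<in> {-1, 1}" "b (axis k 1) = \<sigma> *\<^sub>R axis j 1"
      using assms(2) unfolding signed_perm_def short_unit_def by blast
    moreover obtain m \<tau> where "\<tau> \<in> {-1, 1}" "a (axis j 1) = \<tau> *\<^sub>R axis m 1"
      using assms(1) unfolding signed_perm_def short_unit_def by blast
    moreover have "a (\<sigma> *\<^sub>R axis j 1) = \<sigma> *\<^sub>R a (axis j 1)"
      using assms(1) unfolding signed_perm_def by (simp add: linear_scale)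
    ultimately show ?thesis
      unfolding short_unit_def by (intro exI[of _ m] exI[of _ "\<sigma> * \<tau>"]) auto
  qed
  then show ?thesis
    using assms unfolding signed_perm_def by (auto intro: linear_compose inj_compose)
qed

lemma signed_perm_refl_hyp:
  assumes "r \<in> Delta_B"
  shows "signed_perm (refl_hyp r)"
proof -
  have "short_unit (refl_hyp r (axis k 1))" for k
    using assms
  proof (cases rule: Delta_B_cases)
    case (short j \<sigma>)
    then have "r \<bullet> r = 1"
      by (auto simp: inner_axis_axis)
    then have "refl_hyp r (axis k 1) = axis k 1 - (2 * r $ k) *\<^sub>R r"
      by (simp add: refl_hyp_axis)
    also have "\<dots> = (if k = j then - axis k 1 else axis k 1)"
      using short by (auto simp: axis_nth_if algebra_simps scaleR_2)
    finally show ?thesis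
      by (simp add: short_unit_axis short_unit_neg_axis)
  next
    case (long a b s t)
    obtain \<sigma> where \<sigma>: "\<sigma> \<in> {-1, 1}" "\<sigma> = - s * t"
      using long by auto
    have "r \<bullet> r = 2"
      using long by (auto simp: inner_axis_axis inner_add_left inner_add_right)
    then have "refl_hyp r (axis k 1) = axis k 1 - r $ k *\<^sub>R r"
      by (simp add: refl_hyp_axis)
    also have "\<dots> = (if k = a then \<sigma> *\<^sub>R axis b 1 else if k = b then \<sigma> *\<^sub>R axis a 1 else axis k 1)"
      using long \<sigma>(2) by (auto simp: axis_nth_if algebra_simps)
    finally show ?thesis
      using \<sigma>(1) by (simp add: short_unit_scaleR short_unit_axis)
  qed
  then show ?thesis
    unfolding signed_perm_def
    using linear_refl_hyp inj_refl_hyp[OF Delta_B_nonzero[OF assms]] by blast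
qed

lemma Weyl_B_signed_perm: "w \<in> Weyl_B \<Longrightarrow> signed_perm w"
  unfolding Weyl_B_def
proof (induction rule: gen_group.induct)
  case gen_id
  then show ?case
    by (rule signed_perm_id)
next
  case (gen_step s g)
  then show ?case
    using signed_perm_refl_hyp signed_perm_comp by blast
qed

lemma refl_hyp_in_Weyl_B: "r \<in> Delta_B \<Longrightarrow> refl_hyp r \<in> Weyl_B"
  unfolding Weyl_B_def by (blast intro: gen_group_generator)

lemma refl_hyp_short_unit_diff:
  assumes "short_unit x" "short_unit y" "x \<noteq> y"
  obtains r where "r \<in> Delta_B" "refl_hyp (x - y) = refl_hyp r"
proof -
  obtain i \<sigma> j \<tau> where \<sigma>: "\<sigma> \<in> {-1, 1}" "x = \<sigma> *\<^sub>R axis i 1"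
    and \<tau>: "\<tau> \<in> {-1, 1}" "y = \<tau> *\<^sub>R axis j 1"
    using assms(1,2) unfolding short_unit_def by blast
  show thesis
  proof (cases "i = j")
    case True
    with assms(3) \<sigma> \<tau> have "\<tau> = - \<sigma>"
      by auto
    with True have "x - y = (\<sigma> + \<sigma>) *\<^sub>R axis i 1"
      unfolding \<sigma>(2) \<tau>(2) by (simp only: scaleR_add_left scaleR_minus_left diff_minus_eq_add)
    then show thesis
      using that[OF Delta_B_short[of 1 i]] refl_hyp_scaleR[of "\<sigma> + \<sigma>" "axis i 1"] \<sigma>(1) by auto
  next
    case False
    have "x - y = \<sigma> *\<^sub>R axis i 1 + (- \<tau>) *\<^sub>R axis j 1"
      using \<sigma> \<tau> by simp
    then show thesis
      using that Delta_B_long[OF False \<sigma>(1), of "- \<tau>"] \<tau>(1) by auto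
  qed
qed

lemma signed_perm_fix_axis:
  assumes "signed_perm h" "h (axis k 1) \<noteq> axis k 1"
  obtains r where "r \<in> Delta_B" "refl_hyp r (h (axis k 1)) = axis k 1"
    "\<And>l. h (axis l 1) = axis l 1 \<Longrightarrow> refl_hyp r (axis l 1) = axis l 1"
proof -
  have short: "short_unit (h (axis k 1))"
    using assms(1) by (simp add: signed_perm_def)
  then obtain j \<sigma> where \<sigma>: "\<sigma> \<in> {-1, 1}" and hk: "h (axis k 1) = \<sigma> *\<^sub>R axis j 1"
    unfolding short_unit_def by blast
  define v where "v = h (axis k 1) - axis k 1"
  have swap: "refl_hyp v (h (axis k 1)) = axis k 1"
    unfolding v_def using assms(2) \<sigma> hk by (intro refl_hyp_diff) (auto simp: inner_axis_axis)
  have fixed: "refl_hyp v (axis l 1) = axis l 1" if hl: "h (axis l 1) = axis l 1" for l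
  proof -
    have "l \<noteq> k"
      using hl assms(2) by auto
    moreover have "j \<noteq> l"
    proof
      assume "j = l"
      then have "h (axis k 1) = h (\<sigma> *\<^sub>R axis l 1)"
        using hk hl assms(1) by (simp add: signed_perm_def linear_scale)
      then have "axis k 1 = \<sigma> *\<^sub>R axis l (1::real)"
        using assms(1) by (simp add: signed_perm_def inj_eq)
      then have "axis k 1 $ k = (\<sigma> *\<^sub>R axis l (1::real)) $ k"
        by simp
      then show False
        using \<open>l \<noteq> k\<close> by (simp add: axis_nth_if)
    qed
    ultimately have "v $ l = 0"
      unfolding v_def hk by (simp add: axis_nth_if)
    then show ?thesis
      by (simp add: refl_hyp_axis)
  qed
  obtain r where "r \<in> Delta_B" "refl_hyp v = refl_hyp r"
    using refl_hyp_short_unit_diff[OF short short_unit_axis assms(2)] unfolding v_def .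
  then show thesis
    using that swap fixed by metis
qed

lemma signed_perm_in_Weyl_B: "signed_perm h \<Longrightarrow> h \<in> Weyl_B"
proof (induction "card {k. h (axis k 1) \<noteq> axis k 1}" arbitrary: h rule: less_induct)
  case less
  show ?case
  proof (cases "\<forall>k. h (axis k 1) = axis k 1")
    case True
    then have "h = id"
      using less.prems by (intro linear_eq_on_axes) (simp_all add: signed_perm_def linear_id)
    then show ?thesis
      unfolding Weyl_B_def by (simp add: gen_id)
  next
    case False
    then obtain k where k: "h (axis k 1) \<noteq> axis k 1"
      by blast
    then obtain r where r: "r \<in> Delta_B" "refl_hyp r (h (axis k 1)) = axis k 1"
        "\<And>l. h (axis l 1) = axis l 1 \<Longrightarrow> refl_hyp r (axis l 1) = axis l 1"
      using signed_perm_fix_axis less.prems by blast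
    let ?h' = "refl_hyp r \<circ> h"
    have "{l. ?h' (axis l 1) \<noteq> axis l 1} \<subset> {l. h (axis l 1) \<noteq> axis l 1}"
      using r k by auto
    then have "card {l. ?h' (axis l 1) \<noteq> axis l 1} < card {l. h (axis l 1) \<noteq> axis l 1}"
      by (rule psubset_card_mono[rotated]) simp
    moreover have "signed_perm ?h'"
      using signed_perm_comp signed_perm_refl_hyp r(1) less.prems by blast
    ultimately have "?h' \<in> Weyl_B"
      using less.hyps by blast
    then have "refl_hyp r \<circ> ?h' \<in> Weyl_B"
      unfolding Weyl_B_def using r(1) by (blast intro: gen_step)
    moreover have "refl_hyp r \<circ> ?h' = h"
      using refl_hyp_refl_hyp[OF Delta_B_nonzero[OF r(1)]] by (auto simp: fun_eq_iff)
    ultimately show ?thesis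
      by simp
  qed
qed

lemma finite_signed_perm: "finite {h :: real^'n \<Rightarrow> real^'n. signed_perm h}"
proof -
  have "{x :: real^'n. short_unit x} = range (\<lambda>j. axis j 1) \<union> range (\<lambda>j. - axis j 1)"
    by (auto simp: short_unit_iff)
  then have "finite (PiE UNIV (\<lambda>_::'n. {x :: real^'n. short_unit x}))"
    by (intro finite_PiE) auto
  moreover have "(\<lambda>h k. h (axis k 1)) ` {h. signed_perm h} \<subseteq> PiE UNIV (\<lambda>_. {x. short_unit x})"
    by (auto simp: signed_perm_def)
  moreover have "inj_on (\<lambda>h k. h (axis k 1)) {h :: real^'n \<Rightarrow> real^'n. signed_perm h}"
    by (rule inj_onI, rule linear_eq_on_axes) (auto simp: signed_perm_def fun_eq_iff)
  ultimately show ?thesis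
    by (metis finite_imageD finite_subset)
qed

lemma finite_Weyl_B: "finite Weyl_B"
  using finite_signed_perm by (rule finite_subset[rotated]) (auto intro: Weyl_B_signed_perm)

lemma root_direction_if_refl_hyp_in_Weyl_B:
  assumes "u \<noteq> 0" "refl_hyp u \<in> Weyl_B"
  shows "root_direction u"
proof -
  obtain k where uk: "u $ k \<noteq> 0"
    using assms(1) by (metis vec_eq_iff zero_index)
  define c where "c = 2 * u $ k / (u \<bullet> u)"
  have c: "c \<noteq> 0"
    using uk assms(1) by (simp add: c_def)
  obtain j \<sigma> where \<sigma>: "\<sigma> \<in> {-1, 1}" and "refl_hyp u (axis k 1) = \<sigma> *\<^sub>R axis j 1"
    using Weyl_B_signed_perm[OF assms(2)] unfolding signed_perm_def short_unit_def by blast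
  then have "c *\<^sub>R u = axis k 1 - \<sigma> *\<^sub>R axis j 1"
    by (simp add: refl_hyp_axis c_def algebra_simps)
  then have u: "u = (1 / c) *\<^sub>R (axis k 1 - \<sigma> *\<^sub>R axis j 1)"
    using c by (metis scaleR_scaleR divide_self_if scaleR_one times_divide_eq_left mult_1_left)
  show ?thesis
  proof (cases "j = k")
    case True
    then have "\<sigma> = -1"
      using u assms(1) \<sigma> by auto
    then have "axis k 1 - \<sigma> *\<^sub>R axis j 1 = 2 *\<^sub>R axis k (1::real)"
      using True by (simp add: scaleR_2)
    then have "u = (2 / c) *\<^sub>R axis k 1"
      unfolding u by simp
    then show ?thesis
      using root_direction_scaleR[OF _ Delta_B_short[of 1 k]] c by simp
  next
    case False
    have "axis k 1 - \<sigma> *\<^sub>R axis j 1 = 1 *\<^sub>R axis k 1 + (- \<sigma>) *\<^sub>R axis j 1"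
      by simp
    moreover have "- \<sigma> \<in> {-1, 1}"
      using \<sigma> by auto
    ultimately show ?thesis
      using u root_direction_scaleR[OF _ Delta_B_long[of k j 1 "- \<sigma>"]] False c by simp
  qed
qed

section \<open>Orthonormal frames of root directions\<close>

lemma unit_root_direction_cases [consumes 2, case_names short long]:
  assumes "root_direction x" "x \<bullet> x = 1"
  obtains (short) "short_unit x"
  | (long) a b where "a \<noteq> b" "(x $ a)\<^sup>2 = 1/2" "(x $ b)\<^sup>2 = 1/2"
      "\<And>i. i \<noteq> a \<Longrightarrow> i \<noteq> b \<Longrightarrow> x $ i = 0"
  using assms(1)
proof (cases rule: root_direction_cases)
  case (short d j \<sigma>)
  then have "d\<^sup>2 = 1"
    using assms(2) by (auto simp: inner_axis_axis power2_eq_square)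
  then have "d = 1"
    using \<open>d > 0\<close> by (simp add: power2_eq_1_iff)
  then show thesis
    using that(1) short by (simp add: short_unit_scaleR)
next
  case (long d a b s t)
  then have "x \<bullet> x = 2 * d\<^sup>2"
    by (auto simp: inner_axis_axis inner_add_left inner_add_right power2_eq_square)
  then have "d\<^sup>2 = 1/2"
    using assms(2) by simp
  then show thesis
    using that(2)[of a b] long by (auto simp: axis_nth_if power_mult_distrib)
qed

lemma root_direction_coordinate_square:
  assumes "root_direction x" "x \<bullet> x = 2"
  shows "(x $ i)\<^sup>2 \<in> {0, 1, 2}"
  using assms(1)
proof (cases rule: root_direction_cases)
  case (short d j \<sigma>)
  then have "d\<^sup>2 = 2"
    using assms(2) by (auto simp: inner_axis_axis power2_eq_square)
  then show ?thesis
    using short by (auto simp: axis_nth_if power_mult_distrib)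
next
  case (long d a b s t)
  then have "x \<bullet> x = 2 * d\<^sup>2"
    by (auto simp: inner_axis_axis inner_add_left inner_add_right power2_eq_square)
  then have "d\<^sup>2 = 1"
    using assms(2) by simp
  then show ?thesis
    using long by (auto simp: axis_nth_if power_mult_distrib)
qed

lemma inner_supported_on_two:
  fixes y z :: "real^'n"
  assumes "a \<noteq> b" "\<And>i. i \<noteq> a \<Longrightarrow> i \<noteq> b \<Longrightarrow> y $ i = 0"
  shows "y \<bullet> z = y $ a * z $ a + y $ b * z $ b"
proof -
  have "y = y $ a *\<^sub>R axis a 1 + y $ b *\<^sub>R axis b 1"
    using assms by (auto simp: vec_eq_iff axis_nth_if)
  then have "y \<bullet> z = (y $ a *\<^sub>R axis a 1 + y $ b *\<^sub>R axis b 1) \<bullet> z"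
    by simp
  then show ?thesis
    by (simp add: inner_add_left inner_axis')
qed

lemma orthogonal_root_partner_same_support:
  fixes u v :: "real^'n"
  assumes long: "a \<noteq> b" "(u $ a)\<^sup>2 = 1/2" "(u $ b)\<^sup>2 = 1/2" "\<And>i. i \<noteq> a \<Longrightarrow> i \<noteq> b \<Longrightarrow> u $ i = 0"
    and v: "root_direction v" "v \<bullet> v = 1"
    and uv: "u \<bullet> v = 0" "root_direction (u + v)"
  shows "(v $ a)\<^sup>2 = 1/2" "(v $ b)\<^sup>2 = 1/2" "\<And>i. i \<noteq> a \<Longrightarrow> i \<noteq> b \<Longrightarrow> v $ i = 0"
proof -
  have "u \<bullet> u = 1"
    using long by (simp add: inner_supported_on_two[OF long(1,4)] flip: power2_eq_square)
  then have "(u + v) \<bullet> (u + v) = 2"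
    using v(2) uv(1) by (simp add: inner_add_left inner_add_right inner_commute)
  then have sum_square: "((u + v) $ i)\<^sup>2 \<in> {0, 1, 2}" for i
    using root_direction_coordinate_square uv(2) by blast
  have u_square: "(u $ i)\<^sup>2 \<in> {0, 1/2}" for i
    using long by (cases "i = a \<or> i = b") auto
  from v have same_support: "(v $ i)\<^sup>2 \<in> {0, 1/2} \<and> (v $ i = 0 \<longleftrightarrow> u $ i = 0)" for i
  proof (cases rule: unit_root_direction_cases)
    case short
    then obtain j where j: "v = axis j 1 \<or> v = - axis j 1"
      by (auto simp: short_unit_iff)
    then have "u $ j = 0"
      using uv(1) by (auto simp: inner_axis)
    then have "j \<noteq> a"
      using long(2) by auto
    then have "(u + v) $ a = u $ a"
      using j by (auto simp: axis_nth_if)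
    then show ?thesis
      using sum_square[of a] long(2) by simp
  next
    case (long c d)
    then have "(v $ i)\<^sup>2 \<in> {0, 1/2}"
      by (cases "i = c \<or> i = d") auto
    then show ?thesis
      using u_square[of i] sum_square[of i] by auto
  qed
  have "(v $ i)\<^sup>2 = 1/2" if "u $ i \<noteq> 0" for i
    using same_support[of i] that by auto
  moreover have "u $ a \<noteq> 0" "u $ b \<noteq> 0"
    using long(2,3) by auto
  ultimately show "(v $ a)\<^sup>2 = 1/2" "(v $ b)\<^sup>2 = 1/2" "\<And>i. i \<noteq> a \<Longrightarrow> i \<noteq> b \<Longrightarrow> v $ i = 0"
    using long(4) same_support by auto
qed

lemma orthogonal_halves_product:
  fixes a1 b1 a2 b2 :: real
  assumes "b1\<^sup>2 = 1/2" "b2\<^sup>2 = 1/2" "a1 * a2 + b1 * b2 = 0"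
  shows "(a1 * b1) * (a2 * b2) = -1/4"
proof -
  have "(a1 * b1) * (a2 * b2) = (a1 * a2) * (b1 * b2)"
    by (simp add: ac_simps)
  also have "\<dots> = - (b1 * b2) * (b1 * b2)"
    using assms(3) by (simp only: eq_neg_iff_add_eq_0[symmetric])
  also have "\<dots> = - (b1\<^sup>2 * b2\<^sup>2)"
    by (simp add: power2_eq_square ac_simps)
  finally show ?thesis
    using assms(1,2) by simp
qed

lemma no_three_orthogonal_halves:
  fixes a1 b1 a2 b2 a3 b3 :: real
  assumes "b1\<^sup>2 = 1/2" "b2\<^sup>2 = 1/2" "b3\<^sup>2 = 1/2"
    and "a1 * a2 + b1 * b2 = 0" "a1 * a3 + b1 * b3 = 0" "a2 * a3 + b2 * b3 = 0"
  shows False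
proof -
  have "((a1 * b1) * (a2 * b2) * (a3 * b3))\<^sup>2
      = ((a1 * b1) * (a2 * b2)) * ((a1 * b1) * (a3 * b3)) * ((a2 * b2) * (a3 * b3))"
    by (simp add: power2_eq_square ac_simps)
  also have "\<dots> = -1/64"
    using assms by (simp add: orthogonal_halves_product)
  finally show False
    using zero_le_power2[of "(a1 * b1) * (a2 * b2) * (a3 * b3)"] by linarith
qed

lemma orthonormal_root_frame_short:
  fixes P :: "'n \<Rightarrow> real^'n"
  assumes "CARD('n) \<noteq> 2"
    and root: "\<And>k. root_direction (P k)" "\<And>k l. k \<noteq> l \<Longrightarrow> root_direction (P k + P l)"
    and orthonormal: "\<And>k. P k \<bullet> P k = 1" "\<And>k l. k \<noteq> l \<Longrightarrow> P k \<bullet> P l = 0"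
  shows "short_unit (P k)"
  using root(1)[of k] orthonormal(1)[of k]
proof (cases rule: unit_root_direction_cases)
  case short
  then show ?thesis .
next
  case (long a b)
  have partner: "(P l $ a)\<^sup>2 = 1/2" "(P l $ b)\<^sup>2 = 1/2" "\<And>i. i \<noteq> a \<Longrightarrow> i \<noteq> b \<Longrightarrow> P l $ i = 0"
    if "k \<noteq> l" for l
    using orthogonal_root_partner_same_support[OF long root(1) orthonormal(1)
        orthonormal(2)[OF that] root(2)[OF that]] by auto
  have "card {a, b} \<le> CARD('n)"
    by (rule card_mono) auto
  with \<open>a \<noteq> b\<close> assms(1) have "2 \<le> card (UNIV - {k})"
    by (simp add: card_Diff_singleton)
  then obtain S where "S \<subseteq> UNIV - {k}" "card S = 2"
    by (meson obtain_subset_with_card_n)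
  then obtain l m where lm: "k \<noteq> l" "k \<noteq> m" "l \<noteq> m"
    by (auto simp: card_2_iff)
  have "P k \<bullet> P l = P k $ a * P l $ a + P k $ b * P l $ b"
    "P k \<bullet> P m = P k $ a * P m $ a + P k $ b * P m $ b"
    "P l \<bullet> P m = P l $ a * P m $ a + P l $ b * P m $ b"
    using inner_supported_on_two[OF long(1)] long(4) partner(3)[OF lm(1)] by blast+
  then have False
    using no_three_orthogonal_halves[OF long(3) partner(2)[OF lm(1)] partner(2)[OF lm(2)]]
      orthonormal(2) lm by (metis (no_types))
  then show ?thesis ..
qed

lemma root_preserving_orthogonal_transformation_in_Weyl_B:
  fixes h :: "real^'n \<Rightarrow> real^'n"
  assumes "CARD('n) \<noteq> 2" "orthogonal_transformation h"
    and root: "\<And>r. r \<in> Delta_B \<Longrightarrow> root_direction (h r)"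
  shows "h \<in> Weyl_B"
proof -
  have linear: "linear h" and inner: "\<And>x y. h x \<bullet> h y = x \<bullet> y"
    using assms(2) unfolding orthogonal_transformation_def by auto
  have "short_unit (h (axis k 1))" for k
  proof (rule orthonormal_root_frame_short[OF assms(1)])
    show "root_direction (h (axis k 1))" for k
      using root[OF Delta_B_short[of 1 k]] by simp
    show "root_direction (h (axis k 1) + h (axis l 1))" if "k \<noteq> l" for k l
      using root[OF Delta_B_long[OF that, of 1 1]] linear_add[OF linear] by simp
    show "h (axis k 1) \<bullet> h (axis k 1) = 1" for k
      by (simp add: inner inner_axis_axis)
    show "h (axis k 1) \<bullet> h (axis l 1) = 0" if "k \<noteq> l" for k l
      using that by (simp add: inner inner_axis_axis)
  qed
  then show ?thesis
    using signed_perm_in_Weyl_B linear orthogonal_transformation_inj[OF assms(2)]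
    unfolding signed_perm_def by blast
qed

section \<open>Embeddings\<close>

lemma simplex_family_inner_self: "simplex_family f \<Longrightarrow> f i \<bullet> f i = 1"
  by (simp add: simplex_family_def power2_norm_eq_inner[symmetric])

lemma simplex_family_not_parallel:
  assumes "simplex_family f" "i \<noteq> j"
  shows "f j \<noteq> c *\<^sub>R f i"
proof
  assume parallel: "f j = c *\<^sub>R f i"
  have "f i \<in> range f - {f j}"
    using assms by (auto simp: simplex_family_def inj_eq)
  then have "f j \<in> span (range f - {f j})"
    unfolding parallel by (intro span_mul span_base)
  then show False
    using assms(1) by (auto simp: simplex_family_def dependent_def)
qed

lemma conj_family_group_subset_Weyl_B:
  fixes g :: "real^'n \<Rightarrow> real^'n"
  assumes "embedding_B f g"
  shows "(\<lambda>\<phi>. g \<circ> \<phi> \<circ> inv g) ` family_group f \<subseteq> Weyl_B"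
proof -
  have g: "orthogonal_transformation g" and root: "\<And>i. root_direction (g (f i))"
    using assms by (auto simp: embedding_B_iff)
  have "(\<lambda>s. g \<circ> s \<circ> inv g) ` refl_hyp ` range f \<subseteq> refl_hyp ` Delta_B"
  proof clarify
    fix i
    obtain c where "c > 0" "c *\<^sub>R g (f i) \<in> Delta_B"
      using root unfolding root_direction_def by blast
    moreover have "g \<circ> refl_hyp (f i) \<circ> inv g = refl_hyp (c *\<^sub>R g (f i))"
      using \<open>c > 0\<close> by (simp add: orthogonal_transformation_conj_refl_hyp[OF g] refl_hyp_scaleR)
    ultimately show "g \<circ> refl_hyp (f i) \<circ> inv g \<in> refl_hyp ` Delta_B"
      by blast
  qed
  then show ?thesis
    unfolding family_group_def Weyl_B_def
    using gen_group_conj[OF orthogonal_transformation_bij[OF g]] gen_group_mono by blast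
qed

lemma conj_family_group_eq_Weyl_B:
  fixes g :: "real^'n \<Rightarrow> real^'n"
  assumes "generates_B f" "embedding_B f g"
  shows "(\<lambda>\<phi>. g \<circ> \<phi> \<circ> inv g) ` family_group f = Weyl_B"
proof -
  obtain T :: "real^'n \<Rightarrow> real^'n" where T: "orthogonal_transformation T"
    and TW: "(\<lambda>\<phi>. T \<circ> \<phi> \<circ> inv T) ` family_group f = Weyl_B"
    using assms(1) unfolding generates_B_def by blast
  have g: "orthogonal_transformation g"
    using assms(2) by (simp add: embedding_B_def)
  have "card ((\<lambda>\<phi>. g \<circ> \<phi> \<circ> inv g) ` family_group f) = card (family_group f)"
    by (rule card_image[OF inj_on_subset[OF inj_conj[OF orthogonal_transformation_bij[OF g]]]]) simp
  also have "\<dots> = card (Weyl_B :: (real^'n \<Rightarrow> real^'n) set)"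
    unfolding TW[symmetric]
    by (rule card_image[OF inj_on_subset[OF inj_conj[OF orthogonal_transformation_bij[OF T]]], symmetric]) simp
  finally show ?thesis
    using card_subset_eq[OF finite_Weyl_B conj_family_group_subset_Weyl_B[OF assms(2)]] by simp
qed

lemma generates_B_imp_embedding:
  fixes f :: "'n \<Rightarrow> real^'n"
  assumes "simplex_family f" "generates_B f"
  shows "\<exists>g. embedding_B f g"
proof -
  obtain T :: "real^'n \<Rightarrow> real^'n" where T: "orthogonal_transformation T"
    and TW: "(\<lambda>\<phi>. T \<circ> \<phi> \<circ> inv T) ` family_group f = Weyl_B"
    using assms(2) unfolding generates_B_def by blast
  have "root_direction (T (f i))" for i
  proof (rule root_direction_if_refl_hyp_in_Weyl_B)
    show "T (f i) \<noteq> 0"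
      using assms(1) orthogonal_transformation_norm[OF T, of "f i"]
      by (auto simp: simplex_family_def)
    have "refl_hyp (f i) \<in> family_group f"
      unfolding family_group_def by (blast intro: gen_group_generator)
    then show "refl_hyp (T (f i)) \<in> Weyl_B"
      using TW by (auto simp flip: orthogonal_transformation_conj_refl_hyp[OF T])
  qed
  then show ?thesis
    using T by (auto simp: embedding_B_iff)
qed

lemma embedding_B_transition_root_direction:
  fixes g1 g2 :: "real^'n \<Rightarrow> real^'n"
  assumes "generates_B f" "embedding_B f g1" "embedding_B f g2" "r \<in> Delta_B"
  shows "root_direction ((g2 \<circ> inv g1) r)"
proof (rule root_direction_if_refl_hyp_in_Weyl_B)
  have g1: "orthogonal_transformation g1" and g2: "orthogonal_transformation g2"
    using assms(2,3) by (auto simp: embedding_B_def)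
  then have h: "orthogonal_transformation (g2 \<circ> inv g1)"
    by (simp add: orthogonal_transformation_compose orthogonal_transformation_inv)
  show "(g2 \<circ> inv g1) r \<noteq> 0"
    using orthogonal_transformation_norm[OF h, of r] Delta_B_nonzero[OF assms(4)] by auto
  obtain \<phi> where \<phi>: "\<phi> \<in> family_group f" "refl_hyp r = g1 \<circ> \<phi> \<circ> inv g1"
    using refl_hyp_in_Weyl_B[OF assms(4)] conj_family_group_eq_Weyl_B[OF assms(1,2)] by auto
  have "refl_hyp ((g2 \<circ> inv g1) r) = (g2 \<circ> inv g1) \<circ> refl_hyp r \<circ> inv (g2 \<circ> inv g1)"
    by (rule orthogonal_transformation_conj_refl_hyp[OF h, symmetric])
  also have "\<dots> = g2 \<circ> \<phi> \<circ> inv g2"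
    unfolding \<phi>(2) using orthogonal_transformation_bij[OF g1] orthogonal_transformation_bij[OF g2]
    by (simp add: fun_eq_iff o_inv_distrib bij_imp_bij_inv inv_inv_eq bij_is_inj inv_f_f)
  finally show "refl_hyp ((g2 \<circ> inv g1) r) \<in> Weyl_B"
    using conj_family_group_eq_Weyl_B[OF assms(1,3)] \<phi>(1) by blast
qed

lemma realized_image:
  assumes "linear h" "\<And>i. h (g1 (f i)) = g2 (f i)"
  shows "h ` realized f g1 = realized f g2"
proof -
  have "h (- x) = - h x" for x
    using assms(1) by (rule linear_neg)
  then show ?thesis
    unfolding realized_def setcompr_eq_image by (simp add: image_Un image_image assms(2))
qed

lemma embeddings_Weyl_B_equivalent_if_rank_ne_2:
  fixes g1 g2 :: "real^'n \<Rightarrow> real^'n"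
  assumes "CARD('n) \<noteq> 2" "generates_B f" "embedding_B f g1" "embedding_B f g2"
  shows "\<exists>w\<in>Weyl_B. w ` realized f g1 = realized f g2"
proof
  have g1: "orthogonal_transformation g1" and g2: "orthogonal_transformation g2"
    using assms(3,4) by (auto simp: embedding_B_def)
  then have h: "orthogonal_transformation (g2 \<circ> inv g1)"
    by (simp add: orthogonal_transformation_compose orthogonal_transformation_inv)
  then show "g2 \<circ> inv g1 \<in> Weyl_B"
    using root_preserving_orthogonal_transformation_in_Weyl_B assms(1)
      embedding_B_transition_root_direction[OF assms(2-4)] by blast
  show "(g2 \<circ> inv g1) ` realized f g1 = realized f g2"
    using orthogonal_transformation_linear[OF h] orthogonal_transformation_inj[OF g1]
    by (intro realized_image) simp_all
qed

section \<open>Rank 2\<close>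

lemma Weyl_B_not_commutative:
  fixes p q :: "'n::finite"
  assumes "p \<noteq> q"
  shows "\<exists>w1 w2 :: real^'n \<Rightarrow> real^'n. w1 \<in> Weyl_B \<and> w2 \<in> Weyl_B \<and> w1 \<circ> w2 \<noteq> w2 \<circ> w1"
proof -
  define s1 :: "real^'n \<Rightarrow> real^'n" where "s1 = refl_hyp (axis p 1)"
  define s2 :: "real^'n \<Rightarrow> real^'n" where "s2 = refl_hyp (axis p 1 + axis q 1)"
  have "(axis p 1 + axis q 1) \<bullet> (axis p 1 + axis q 1 :: real^'n) = 2"
    using assms by (simp add: inner_add_left inner_add_right inner_axis_axis)
  then have "s1 (axis p 1) = - axis p 1" "s1 (axis q 1) = axis q 1" "s2 (axis p 1) = - axis q 1"
    using assms unfolding s1_def s2_def refl_hyp_axis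
    by (simp_all add: inner_axis_axis axis_nth_if scaleR_2)
  then have "(s1 \<circ> s2) (axis p 1) = - axis q 1" "(s2 \<circ> s1) (axis p 1) = axis q 1"
    unfolding s1_def s2_def by (simp_all add: linear_neg[OF linear_refl_hyp])
  moreover have "- axis q 1 \<noteq> (axis q 1 :: real^'n)"
    by (metis axis_nth neg_equal_zero one_neq_zero vector_uminus_component)
  ultimately have "s1 \<circ> s2 \<noteq> s2 \<circ> s1"
    by metis
  moreover have "s1 \<in> Weyl_B" "s2 \<in> Weyl_B"
    unfolding s1_def s2_def using refl_hyp_in_Weyl_B Delta_B_short[of 1 p] Delta_B_long[OF assms, of 1 1]
    by simp_all
  ultimately show ?thesis
    by blast
qed

lemma generates_B_rank_2_nonorthogonal:
  fixes f :: "'n \<Rightarrow> real^'n"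
  assumes "UNIV = {p, q}" "p \<noteq> q" "generates_B f"
  shows "f p \<bullet> f q \<noteq> 0"
proof
  assume orthogonal: "f p \<bullet> f q = 0"
  have "s \<circ> t = t \<circ> s" if generators: "s \<in> refl_hyp ` range f" "t \<in> refl_hyp ` range f" for s t
  proof -
    obtain i j where st: "s = refl_hyp (f i)" "t = refl_hyp (f j)"
      using generators by blast
    have "i \<in> {p, q}" "j \<in> {p, q}"
      using assms(1) by auto
    then have "i = j \<or> f i \<bullet> f j = 0"
      using orthogonal by (auto simp: inner_commute)
    then show ?thesis
      using st refl_hyp_commute by metis
  qed
  then have commute: "a \<circ> b = b \<circ> a" if "a \<in> family_group f" "b \<in> family_group f" for a b
    using gen_group_commute that unfolding family_group_def by blast
  obtain T :: "real^'n \<Rightarrow> real^'n" where T: "bij T"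
    and TW: "(\<lambda>\<phi>. T \<circ> \<phi> \<circ> inv T) ` family_group f = Weyl_B"
    using assms(3) orthogonal_transformation_bij unfolding generates_B_def by blast
  have "w1 \<circ> w2 = w2 \<circ> w1" if "w1 \<in> Weyl_B" "w2 \<in> Weyl_B" for w1 w2 :: "real^'n \<Rightarrow> real^'n"
    using that commute unfolding TW[symmetric] by (auto simp: conj_comp[OF T])
  then show False
    using Weyl_B_not_commutative[OF assms(2)] by blast
qed

text \<open>Meaningful in rank 2 only, where these are the unit vectors along the long roots
  \<open>\<plusminus>h\<^sub>p \<plusminus> h\<^sub>q\<close>.\<close>

definition long_unit :: "real^'n \<Rightarrow> bool" where
  "long_unit x \<longleftrightarrow> (\<forall>i. (x $ i)\<^sup>2 = 1/2)"

lemma rank_2_unit_root_direction_cases: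
  fixes x :: "real^'n" and p q :: 'n
  assumes "UNIV = {p, q}" "root_direction x" "x \<bullet> x = 1"
  shows "short_unit x \<or> long_unit x"
  using assms(2,3)
proof (cases rule: unit_root_direction_cases)
  case short
  then show ?thesis ..
next
  case (long a b)
  have "i = a \<or> i = b" for i
  proof -
    have "i \<in> {p, q}" "a \<in> {p, q}" "b \<in> {p, q}"
      using assms(1) by auto
    then show ?thesis
      using \<open>a \<noteq> b\<close> by auto
  qed
  then show ?thesis
    using long unfolding long_unit_def by metis
qed

lemma rank_2_inner:
  fixes x y :: "real^'n" and p q :: 'n
  assumes "UNIV = {p, q}" "p \<noteq> q"
  shows "x \<bullet> y = x $ p * y $ p + x $ q * y $ q"
  using assms by (intro inner_supported_on_two) auto

lemma short_unit_nonorthogonal: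
  assumes "short_unit u" "short_unit v" "u \<bullet> v \<noteq> 0"
  shows "v = u \<or> v = - u"
proof -
  obtain i \<sigma> j \<tau> where "\<sigma> \<in> {-1, 1}" "u = \<sigma> *\<^sub>R axis i 1" "\<tau> \<in> {-1, 1}" "v = \<tau> *\<^sub>R axis j 1"
    using assms(1,2) unfolding short_unit_def by blast
  moreover from this have "i = j"
    using assms(3) by (auto simp: inner_axis_axis split: if_splits)
  ultimately show ?thesis
    by auto
qed

lemma rank_2_long_unit_nonorthogonal:
  fixes u v :: "real^'n" and p q :: 'n
  assumes pq: "UNIV = {p, q}" "p \<noteq> q"
    and "long_unit u" "long_unit v" "u \<bullet> v \<noteq> 0"
  shows "v = u \<or> v = - u"
proof -
  have u_square: "\<And>i. (u $ i)\<^sup>2 = 1/2" and v_square: "\<And>i. (v $ i)\<^sup>2 = 1/2"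
    using assms(3,4) unfolding long_unit_def by auto
  have product_square: "(u $ i * v $ i)\<^sup>2 = 1/4" for i
    by (simp add: power_mult_distrib u_square v_square)
  then have "u $ q * v $ q = u $ p * v $ p \<or> u $ q * v $ q = - (u $ p * v $ p)"
    by (metis power2_eq_iff)
  then have same_product: "u $ q * v $ q = u $ p * v $ p"
    using assms(5) rank_2_inner[OF pq, of u v] by auto
  define \<kappa> where "\<kappa> = 2 * (u $ p * v $ p)"
  have "v $ i = \<kappa> * u $ i" for i
  proof -
    have "i \<in> {p, q}"
      using pq(1) by auto
    then have "u $ i * v $ i = u $ p * v $ p"
      using same_product by auto
    then have "\<kappa> * u $ i = 2 * (u $ i)\<^sup>2 * v $ i"
      unfolding \<kappa>_def by (simp add: power2_eq_square algebra_simps)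
    then show ?thesis
      using u_square[of i] by simp
  qed
  then have "v = \<kappa> *\<^sub>R u"
    by (simp add: vec_eq_iff)
  moreover have "\<kappa>\<^sup>2 = 1"
    unfolding \<kappa>_def using product_square[of p] by (simp add: power_mult_distrib)
  ultimately show ?thesis
    by (auto simp: power2_eq_1_iff)
qed

lemma rank_2_nonorthogonal_unit_roots:
  fixes u v :: "real^'n" and p q :: 'n
  assumes pq: "UNIV = {p, q}" "p \<noteq> q"
    and u: "root_direction u" "u \<bullet> u = 1" and v: "root_direction v" "v \<bullet> v = 1"
    and uv: "u \<bullet> v \<noteq> 0" "v \<noteq> u" "v \<noteq> - u"
  shows "short_unit u \<and> long_unit v \<or> long_unit u \<and> short_unit v"
  using rank_2_unit_root_direction_cases[OF pq(1) u] rank_2_unit_root_direction_cases[OF pq(1) v]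
    short_unit_nonorthogonal[of u v] rank_2_long_unit_nonorthogonal[OF pq, of u v] uv by blast

lemma signed_perm_signed_coordinate_perm:
  fixes \<pi> :: "'n::finite \<Rightarrow> 'n" and \<tau> :: "'n \<Rightarrow> real"
  assumes "bij \<pi>" "\<And>k. \<tau> k \<in> {-1, 1}"
  shows "signed_perm (\<lambda>x. \<chi> k. \<tau> k * x $ \<pi> k)"
proof -
  let ?w = "\<lambda>x :: real^'n. \<chi> k. \<tau> k * x $ \<pi> k"
  have "linear ?w"
    by (intro linearI) (simp_all add: vec_eq_iff algebra_simps)
  moreover have "inj ?w"
  proof (rule injI)
    fix x y :: "real^'n"
    assume "?w x = ?w y"
    then have scaled: "\<tau> k * x $ \<pi> k = \<tau> k * y $ \<pi> k" for k
      by (simp add: vec_eq_iff)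
    have "x $ \<pi> k = y $ \<pi> k" for k
      using scaled[of k] assms(2)[of k] by auto
    then have "x $ m = y $ m" for m
      using surj_f_inv_f[OF bij_is_surj[OF assms(1)], of m] by metis
    then show "x = y"
      by (simp add: vec_eq_iff)
  qed
  moreover have "short_unit (?w (axis m 1))" for m
  proof -
    have "?w (axis m 1) = \<tau> (inv \<pi> m) *\<^sub>R axis (inv \<pi> m) 1"
      using assms(1) by (auto simp: vec_eq_iff axis_nth_if bij_inv_eq_iff bij_is_inj inv_f_f)
    then show ?thesis
      using short_unit_scaleR[OF assms(2)] by simp
  qed
  ultimately show ?thesis
    unfolding signed_perm_def by blast
qed

lemma rank_2_other_index:
  fixes p q k :: 'n
  assumes "UNIV = {p, q}" "p \<noteq> q"
  obtains j where "j \<noteq> k" "\<And>m. m = k \<or> m = j"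
proof -
  have cover: "m = p \<or> m = q" for m
    using assms(1) by blast
  show thesis
  proof (cases "k = p")
    case True
    then show thesis
      using that[of q] cover assms(2) by blast
  next
    case False
    then show thesis
      using that[of p] cover by blast
  qed
qed

lemma rank_2_signed_perm_coordinates:
  fixes i j i' j' :: "'n::finite"
  assumes "j \<noteq> i" "\<And>m. m = i \<or> m = j" "j' \<noteq> i'" "\<And>m. m = i' \<or> m = j'"
    and "c \<in> {-1, 1}" "\<epsilon> \<in> {-1, 1}"
  shows "signed_perm (\<lambda>x. \<chi> m. (if m = i' then c else \<epsilon>) * x $ (if m = i' then i else j))"
proof (rule signed_perm_signed_coordinate_perm)
  have "inj (\<lambda>m. if m = i' then i else j)"
  proof (rule injI)
    fix x y
    assume "(if x = i' then i else j) = (if y = i' then i else j)"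
    then show "x = y"
      using assms(1) assms(4)[of x] assms(4)[of y] by (auto split: if_splits)
  qed
  then show "bij (\<lambda>m. if m = i' then i else j)"
    unfolding bij_def using finite_UNIV_inj_surj[OF finite] by blast
  show "(if m = i' then c else \<epsilon>) \<in> {-1, 1}" for m
    using assms(5,6) by simp
qed

lemma sign_of_half_squares:
  fixes x y c :: real
  assumes "x\<^sup>2 = 1/2" "y\<^sup>2 = 1/2" "c \<in> {-1, 1}"
  shows "2 * c * x * y \<in> {-1, 1}"
proof -
  have "(2 * c * x * y)\<^sup>2 = 1"
    using assms(3) by (auto simp: power_mult_distrib assms(1,2))
  then show ?thesis
    by (auto simp: power2_eq_1_iff)
qed

lemma rank_2_signed_perm_between_pairs:
  fixes s l s' l' :: "real^'n" and p q :: 'n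
  assumes pq: "UNIV = {p, q}" "p \<noteq> q"
    and "short_unit s" "long_unit l" "short_unit s'" "long_unit l'"
  obtains w where "signed_perm w" "w s = s'" "w l = l' \<or> w l = - l'"
proof -
  obtain i \<sigma> where \<sigma>: "\<sigma> \<in> {-1, 1}" "s = \<sigma> *\<^sub>R axis i 1"
    using assms(3) unfolding short_unit_def by blast
  obtain i' \<sigma>' where \<sigma>': "\<sigma>' \<in> {-1, 1}" "s' = \<sigma>' *\<^sub>R axis i' 1"
    using assms(5) unfolding short_unit_def by blast
  obtain j where j: "j \<noteq> i" "\<And>m. m = i \<or> m = j"
    using rank_2_other_index[OF pq, where k = i] by blast
  obtain j' where j': "j' \<noteq> i'" "\<And>m. m = i' \<or> m = j'"
    using rank_2_other_index[OF pq, where k = i'] by blast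
  have l: "(l $ m)\<^sup>2 = 1/2" "(l' $ m)\<^sup>2 = 1/2" for m
    using assms(4,6) unfolding long_unit_def by auto
  \<comment> \<open>\<open>w\<close> moves coordinate \<open>i\<close> to \<open>i'\<close> with the sign \<open>c\<close> forced by \<open>w s = s'\<close>, and
    coordinate \<open>j\<close> to \<open>j'\<close> with the sign \<open>\<epsilon>\<close> making \<open>w l\<close> parallel to \<open>l'\<close>.
    Every coordinate \<open>x\<close> of \<open>l\<close> and \<open>l'\<close> has \<open>x\<^sup>2 = 1/2\<close>, i.e. \<open>1/x = 2 x\<close>.\<close>
  define c where "c = \<sigma> * \<sigma>'"
  define \<kappa> where "\<kappa> = 2 * c * l $ i * l' $ i'"
  define \<epsilon> where "\<epsilon> = 2 * \<kappa> * l' $ j' * l $ j"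
  define w :: "real^'n \<Rightarrow> real^'n"
    where "w = (\<lambda>x. \<chi> m. (if m = i' then c else \<epsilon>) * x $ (if m = i' then i else j))"
  have c: "c \<in> {-1, 1}"
    unfolding c_def using \<sigma>(1) \<sigma>'(1) by auto
  then have \<kappa>: "\<kappa> \<in> {-1, 1}"
    unfolding \<kappa>_def by (rule sign_of_half_squares[OF l(1) l(2)])
  then have "\<epsilon> \<in> {-1, 1}"
    unfolding \<epsilon>_def by (rule sign_of_half_squares[OF l(2) l(1)])
  with c have "signed_perm w"
    unfolding w_def using j j' by (intro rank_2_signed_perm_coordinates)
  moreover have "w s = s'"
    using j(1) \<sigma>(1) by (auto simp: vec_eq_iff w_def \<sigma>(2) \<sigma>'(2) axis_nth_if c_def)
  moreover have "w l = \<kappa> *\<^sub>R l'"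
  proof -
    have "\<kappa> * l' $ i' = c * l $ i * (2 * (l' $ i')\<^sup>2)"
      unfolding \<kappa>_def by (simp add: power2_eq_square)
    moreover have "\<epsilon> * l $ j = \<kappa> * l' $ j' * (2 * (l $ j)\<^sup>2)"
      unfolding \<epsilon>_def by (simp add: power2_eq_square)
    ultimately have "w l $ m = \<kappa> * l' $ m" for m
      using j'(2)[of m] l by (auto simp: w_def)
    then show ?thesis
      by (simp add: vec_eq_iff)
  qed
  then have "w l = l' \<or> w l = - l'"
    using \<kappa> by auto
  ultimately show thesis
    using that by blast
qed

lemma rank_2_realized_short_long:
  fixes f :: "'n \<Rightarrow> real^'n" and p q :: 'n
  assumes pq: "UNIV = {p, q}" "p \<noteq> q"
    and "simplex_family f" "generates_B f" "embedding_B f g"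
  obtains s l where "short_unit s" "long_unit l" "realized f g = {s, l, - s, - l}"
proof -
  have g: "orthogonal_transformation g" and root: "\<And>i. root_direction (g (f i))"
    using assms(5) by (auto simp: embedding_B_iff)
  have inner: "g x \<bullet> g y = x \<bullet> y" for x y
    using g by (simp add: orthogonal_transformation_def)
  have neg: "g (c *\<^sub>R x) = c *\<^sub>R g x" for c x
    using orthogonal_transformation_scaleR[OF g] .
  have "g (f q) \<noteq> c *\<^sub>R g (f p)" for c
    using simplex_family_not_parallel[OF assms(3) pq(2)] orthogonal_transformation_inj[OF g]
    by (metis neg inj_eq)
  then have "g (f q) \<noteq> g (f p)" "g (f q) \<noteq> - g (f p)"
    by (metis scaleR_one, metis scaleR_minus1_left)
  moreover have "g (f p) \<bullet> g (f q) \<noteq> 0"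
    using generates_B_rank_2_nonorthogonal[OF pq assms(4)] inner by simp
  ultimately have "short_unit (g (f p)) \<and> long_unit (g (f q)) \<or> long_unit (g (f p)) \<and> short_unit (g (f q))"
    using rank_2_nonorthogonal_unit_roots[OF pq root[of p] _ root[of q]] simplex_family_inner_self[OF assms(3)] inner
    by simp
  moreover have realized: "realized f g = {g (f p), g (f q), - g (f p), - g (f q)}"
    unfolding realized_def setcompr_eq_image using pq(1) by auto
  moreover have "realized f g = {g (f q), g (f p), - g (f q), - g (f p)}"
    unfolding realized by auto
  ultimately show thesis
    using that by blast
qed

lemma embeddings_Weyl_B_equivalent_if_rank_2:
  fixes f :: "'n \<Rightarrow> real^'n" and p q :: 'n
  assumes pq: "UNIV = {p, q}" "p \<noteq> q"
    and "simplex_family f" "generates_B f" "embedding_B f g1" "embedding_B f g2"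
  shows "\<exists>w\<in>Weyl_B. w ` realized f g1 = realized f g2"
proof -
  obtain s1 l1 where 1: "short_unit s1" "long_unit l1" "realized f g1 = {s1, l1, - s1, - l1}"
    using rank_2_realized_short_long[OF pq assms(3,4,5)] .
  obtain s2 l2 where 2: "short_unit s2" "long_unit l2" "realized f g2 = {s2, l2, - s2, - l2}"
    using rank_2_realized_short_long[OF pq assms(3,4,6)] .
  obtain w where w: "signed_perm w" "w s1 = s2" "w l1 = l2 \<or> w l1 = - l2"
    using rank_2_signed_perm_between_pairs[OF pq 1(1,2) 2(1,2)] .
  have "w (- x) = - w x" for x
    using w(1) by (simp add: signed_perm_def linear_neg)
  then have "w ` realized f g1 = realized f g2"
    unfolding 1(3) 2(3) using w(2,3) by auto
  then show ?thesis
    using signed_perm_in_Weyl_B[OF w(1)] by blast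
qed

theorem corollary2:
  fixes f :: "'n \<Rightarrow> real^'n"
  assumes "simplex_family f" and "generates_B f"
  shows "(\<exists>g. embedding_B f g) \<and>
         (\<forall>g1 g2. embedding_B f g1 \<and> embedding_B f g2 \<longrightarrow>
            (\<exists>w\<in>Weyl_B. w ` realized f g1 = realized f g2))"
proof -
  have "\<exists>w\<in>Weyl_B. w ` realized f g1 = realized f g2"
    if "embedding_B f g1" "embedding_B f g2" for g1 g2
  proof (cases "CARD('n) = 2")
    case True
    then obtain p q :: 'n where "UNIV = {p, q}" "p \<noteq> q"
      by (metis card_2_iff)
    then show ?thesis
      using embeddings_Weyl_B_equivalent_if_rank_2 assms that by blast
  next
    case False
    then show ?thesis
      using embeddings_Weyl_B_equivalent_if_rank_ne_2 assms(2) that by blast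
  qed
  then show ?thesis
    using generates_B_imp_embedding[OF assms] by blast
qed

end
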